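(* Suppose each $f_v$ is $K_v$-Lipschitz and let $\bar K=\frac1{rn}\sum_vK_v$. If $\mathcal P$ is sampled uniformly from all partitions of $V(G)$ into $n$ (ordered) sets of size $r$ and $T=T_{\vec B,\mathcal P}$ with $\vec B$ independent of $\mathcal P$, then $$\mathbb E_{\mathcal P}\big|\mathbb E_{\vec B}(\xi\mid\mathcal P)\big|\le\frac{\bar K}{rn-1}.$$
   Context: Let $n,p,q$ be positive integers, $r=p+q$, $G$ a finite simple graph with $|V(G)|=rn$ and no isolated vertices; $\mathcal N(v)$, $d(v)$ neighbor set and degree. For each $v$, $f_v:2^{\mathcal N(v)}\to\mathbb R$ with $f_v(\emptyset)=0$. $\sigma_T(v)=q$ if $v\in T$, $-p$ otherwise; for $|T|=pn$, $\xi=\frac1{pqn}\sum_v\sigma_T(v)f_v(T\cap\mathcal N(v))$. $f_v$ is $K_v$-Lipschitz ($K_v>0$) if $|f_v(A)-f_v(A')|\le K_v|A\triangle A'|/d(v)$ for all $A,A'\subseteq\mathcal N(v)$. Restricted randomization: for $\mathcal P=(S_1,\dots,S_n)$, $S_i=\{w_i^1,\dots,w_i^r\}$, $B_i$ i.i.d. uniform $p$-subsets of $\{1,\dots,r\}$, $T_{\vec B,\mathcal P}=\{w_i^j:j\in B_i\}$. *)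

theory Defs
  imports Complex_Main "HOL-Library.FuncSet"
begin

text \<open>Simple graph on vertex set V given by a symmetric irreflexive relation E.\<close>

definition nbhd :: "'a set \<Rightarrow> ('a \<Rightarrow> 'a \<Rightarrow> bool) \<Rightarrow> 'a \<Rightarrow> 'a set" where
  "nbhd V E v = {u \<in> V. E v u}"

definition deg :: "'a set \<Rightarrow> ('a \<Rightarrow> 'a \<Rightarrow> bool) \<Rightarrow> 'a \<Rightarrow> nat" where
  "deg V E v = card (nbhd V E v)"

definition sigmaT :: "nat \<Rightarrow> nat \<Rightarrow> 'a set \<Rightarrow> 'a \<Rightarrow> real" where
  "sigmaT p q T v = (if v \<in> T then real q else - real p)"

definition xi :: "'a set \<Rightarrow> ('a \<Rightarrow> 'a \<Rightarrow> bool) \<Rightarrow> ('a \<Rightarrow> 'a set \<Rightarrow> real)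
    \<Rightarrow> nat \<Rightarrow> nat \<Rightarrow> nat \<Rightarrow> 'a set \<Rightarrow> real" where
  "xi V E f n p q T = (1 / (real p * real q * real n)) *
      (\<Sum>v\<in>V. sigmaT p q T v * f v (T \<inter> nbhd V E v))"

definition lipschitz_vertex :: "'a set \<Rightarrow> ('a \<Rightarrow> 'a \<Rightarrow> bool) \<Rightarrow> ('a \<Rightarrow> 'a set \<Rightarrow> real)
    \<Rightarrow> 'a \<Rightarrow> real \<Rightarrow> bool" where
  "lipschitz_vertex V E f v K \<longleftrightarrow>
     (\<forall>A A'. A \<subseteq> nbhd V E v \<longrightarrow> A' \<subseteq> nbhd V E v \<longrightarrow>
        \<bar>f v A - f v A'\<bar> \<le> K * real (card ((A - A') \<union> (A' - A))) / real (deg V E v))"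

text \<open>Ordered partitions (S_1,...,S_n) with S_i = {w_i^1,...,w_i^r}, encoded as
  bijections w : {..<n} \<times> {..<r} \<rightarrow> V (extensional), w(i,j) = w_i^j.\<close>
definition partitions :: "'a set \<Rightarrow> nat \<Rightarrow> nat \<Rightarrow> ((nat \<times> nat) \<Rightarrow> 'a) set" where
  "partitions V n r = {w \<in> ({..<n} \<times> {..<r}) \<rightarrow>\<^sub>E V. bij_betw w ({..<n} \<times> {..<r}) V}"

definition Bvecs :: "nat \<Rightarrow> nat \<Rightarrow> nat \<Rightarrow> (nat \<Rightarrow> nat set) set" where
  "Bvecs n r p = ({..<n} \<rightarrow>\<^sub>E {B. B \<subseteq> {..<r} \<and> card B = p})"

definition Tset :: "nat \<Rightarrow> (nat \<Rightarrow> nat set) \<Rightarrow> ((nat \<times> nat) \<Rightarrow> 'a) \<Rightarrow> 'a set" where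
  "Tset n B w = {w (i, j) | i j. i < n \<and> j \<in> B i}"

text \<open>E_B(xi | P): average over the uniform, independent B_i.\<close>
definition cond_exp_xi :: "'a set \<Rightarrow> ('a \<Rightarrow> 'a \<Rightarrow> bool) \<Rightarrow> ('a \<Rightarrow> 'a set \<Rightarrow> real)
    \<Rightarrow> nat \<Rightarrow> nat \<Rightarrow> nat \<Rightarrow> ((nat \<times> nat) \<Rightarrow> 'a) \<Rightarrow> real" where
  "cond_exp_xi V E f n p q w =
     (\<Sum>B\<in>Bvecs n (p + q) p. xi V E f n p q (Tset n B w)) / real (card (Bvecs n (p + q) p))"

end

theory Submission
  imports Defs "HOL-Combinatorics.Transposition"
begin

text \<open>Fix the partition and a vertex v = w(i,j). Exchanging unit j of block i with another
  unit k of the same block is a bijection between the assignments that treat j but not k and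
  those that treat k but not j. Every assignment treating j has q untreated partners k and every
  assignment not treating j has p treated ones, so the sum of sigma_T(v) f_v(T) over all
  assignments is a sum of differences f_v(T) - f_v(T') with T and T' differing only in w(i,k);
  by the Lipschitz condition each is at most K_v / d(v) if w(i,k) is a neighbour of v, and 0
  otherwise. Under a uniformly random partition (w(i,j), w(i,k)) is a uniformly random ordered
  pair of distinct vertices, and K_v / d(v) summed over all ordered adjacent pairs (v, u) is the
  sum of all K_v.\<close>

section \<open>Counting treatment vectors\<close>

lemma finite_Bvecs: "finite (Bvecs n r p)"
  unfolding Bvecs_def by (intro finite_PiE) auto

lemma Bvecs_memD:
  assumes "B \<in> Bvecs n r p" "i < n"
  shows "B i \<subseteq> {..<r}" "card (B i) = p"
  using assms unfolding Bvecs_def by (auto simp: PiE_iff)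

lemma fun_upd_in_Bvecs:
  assumes "B \<in> Bvecs n r p" "i < n" "X \<subseteq> {..<r}" "card X = p"
  shows "B(i := X) \<in> Bvecs n r p"
  using assms unfolding Bvecs_def by (auto simp: PiE_iff extensional_def)

lemma card_Bvecs: "card (Bvecs n r p) = (r choose p) ^ n"
  unfolding Bvecs_def using n_subsets[of "{..<r}" p] by (simp add: card_PiE)

lemma card_subsets_mem_notin:
  assumes "finite A" "j \<in> A" "k \<in> A" "j \<noteq> k" "p > 0"
  shows "card {X. X \<subseteq> A \<and> card X = p \<and> j \<in> X \<and> k \<notin> X} = (card A - 2) choose (p - 1)"
proof -
  let ?Y = "{Y. Y \<subseteq> A - {j, k} \<and> card Y = p - 1}"
  have "{X. X \<subseteq> A \<and> card X = p \<and> j \<in> X \<and> k \<notin> X} = insert j ` ?Y"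
  proof (intro set_eqI iffI)
    fix X assume X: "X \<in> {X. X \<subseteq> A \<and> card X = p \<and> j \<in> X \<and> k \<notin> X}"
    then have "X - {j} \<in> ?Y" "X = insert j (X - {j})"
      using finite_subset[OF _ assms(1)] by auto
    then show "X \<in> insert j ` ?Y" by blast
  next
    fix X assume "X \<in> insert j ` ?Y"
    then obtain Y where "Y \<in> ?Y" "X = insert j Y" by blast
    moreover have "finite Y" using \<open>Y \<in> ?Y\<close> finite_subset[OF _ assms(1)] by blast
    moreover have "j \<notin> Y" using \<open>Y \<in> ?Y\<close> by blast
    ultimately show "X \<in> {X. X \<subseteq> A \<and> card X = p \<and> j \<in> X \<and> k \<notin> X}"
      using assms by auto
  qed
  moreover have "inj_on (insert j) ?Y"
    by (rule inj_onI) (metis Diff_iff insert_iff mem_Collect_eq subset_iff Diff_insert_absorb)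
  moreover have "card (A - {j, k}) = card A - 2" using assms by (simp add: card_Diff_subset)
  ultimately show ?thesis using n_subsets[of "A - {j, k}" "p - 1"] assms(1) by (simp add: card_image)
qed

lemma binomial_mem_notin_identity:
  assumes "2 \<le> r" "0 < p"
  shows "((r - 2) choose (p - 1)) * (r * (r - 1)) = p * (r - p) * (r choose p)"
proof -
  obtain r' p' where r': "r = Suc r'" and p': "p = Suc p'"
    using assms by (metis Suc_pred' less_le_trans pos2)
  have "r - 2 = r' - 1" "r - 1 = r'" "p - 1 = p'" using r' p' by simp_all
  then have "((r - 2) choose (p - 1)) * (r * (r - 1)) = r * (r' * ((r' - 1) choose p'))"
    by (simp only: mult.commute mult.left_commute)
  also have "\<dots> = r * ((r' - p') * (r' choose p'))" by (simp add: binomial_absorb_comp)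
  also have "\<dots> = (r - p) * (r * (r' choose p'))" using r' p' by (simp only: diff_Suc_Suc ac_simps)
  also have "r * (r' choose p') = (r choose p) * p"
    using Suc_times_binomial_eq[of r' p'] r' p' by simp
  finally show ?thesis by (simp only: ac_simps)
qed

lemma card_Bvecs_mem_notin:
  assumes "i < n" "j < r" "k < r" "j \<noteq> k" "p > 0"
  shows "card {B \<in> Bvecs n r p. j \<in> B i \<and> k \<notin> B i} * (r * (r - 1))
         = p * (r - p) * card (Bvecs n r p)"
proof -
  let ?S = "\<lambda>l. if l = i then {X. X \<subseteq> {..<r} \<and> card X = p \<and> j \<in> X \<and> k \<notin> X}
                else {X. X \<subseteq> {..<r} \<and> card X = p}"
  have "{B \<in> Bvecs n r p. j \<in> B i \<and> k \<notin> B i} = PiE {..<n} ?S"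
    using assms(1) unfolding Bvecs_def by (intro set_eqI) (auto simp: PiE_iff split: if_splits)
  then have "card {B \<in> Bvecs n r p. j \<in> B i \<and> k \<notin> B i}
      = (\<Prod>l<n. if l = i then (r - 2) choose (p - 1) else r choose p)"
    using card_subsets_mem_notin[of "{..<r}" j k p] n_subsets[of "{..<r}" p] assms
    by (auto simp: card_PiE intro!: prod.cong)
  also have "\<dots> = ((r - 2) choose (p - 1)) * (r choose p) ^ (n - 1)"
  proof -
    have "{..<n} \<inter> - {i} = {..<n} - {i}" by blast
    then show ?thesis using assms(1) by (simp add: prod.If_cases)
  qed
  finally show ?thesis
    using binomial_mem_notin_identity[of r p] assms
    by (simp add: card_Bvecs power_eq_if[of _ n] ac_simps)
qed

section \<open>Exchanging two units of a block\<close>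

definition exchange :: "nat \<Rightarrow> nat \<Rightarrow> nat \<Rightarrow> (nat \<Rightarrow> nat set) \<Rightarrow> nat \<Rightarrow> nat set" where
  "exchange i j k B = B(i := insert k (B i - {j}))"

lemma exchange_exchange:
  assumes "j \<in> B i" "k \<notin> B i"
  shows "exchange i k j (exchange i j k B) = B"
  using assms unfolding exchange_def by (auto simp: insert_absorb)

lemma exchange_in_Bvecs:
  assumes "B \<in> Bvecs n r p" "i < n" "j \<in> B i" "k < r" "k \<notin> B i"
  shows "exchange i j k B \<in> Bvecs n r p"
proof -
  have "finite (B i)" "B i \<subseteq> {..<r}" "card (B i) = p"
    using Bvecs_memD[OF assms(1,2)] finite_subset by auto
  then have "card (insert k (B i - {j})) = p"
    using assms(3,5) card_gt_0_iff[of "B i"] by (auto simp: card_Suc_Diff1)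
  then show ?thesis
    unfolding exchange_def using assms \<open>B i \<subseteq> {..<r}\<close> by (intro fun_upd_in_Bvecs) auto
qed

lemma bij_betw_exchange:
  assumes "i < n" "k < r" "j < r"
  shows "bij_betw (exchange i j k)
           {B \<in> Bvecs n r p. j \<in> B i \<and> k \<notin> B i} {B \<in> Bvecs n r p. j \<notin> B i \<and> k \<in> B i}"
proof (rule bij_betw_byWitness[where f' = "exchange i k j"])
  show "exchange i j k ` {B \<in> Bvecs n r p. j \<in> B i \<and> k \<notin> B i}
          \<subseteq> {B \<in> Bvecs n r p. j \<notin> B i \<and> k \<in> B i}"
    using assms exchange_in_Bvecs by (fastforce simp: exchange_def)
  show "exchange i k j ` {B \<in> Bvecs n r p. j \<notin> B i \<and> k \<in> B i}
          \<subseteq> {B \<in> Bvecs n r p. j \<in> B i \<and> k \<notin> B i}"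
    using assms exchange_in_Bvecs by (fastforce simp: exchange_def)
qed (auto simp: exchange_exchange)

lemma sum_untreated_partners:
  fixes g :: "(nat \<Rightarrow> nat set) \<Rightarrow> real"
  assumes "i < n" "j < r" "r = p + q"
  shows "(\<Sum>k\<in>{..<r} - {j}. \<Sum>B | B \<in> Bvecs n r p \<and> j \<in> B i \<and> k \<notin> B i. g B)
           = real q * (\<Sum>B | B \<in> Bvecs n r p \<and> j \<in> B i. g B)"
proof -
  have "(\<Sum>k\<in>{..<r} - {j}. \<Sum>B | B \<in> Bvecs n r p \<and> j \<in> B i \<and> k \<notin> B i. g B)
      = (\<Sum>B | B \<in> Bvecs n r p \<and> j \<in> B i. \<Sum>k | k \<in> {..<r} - {j} \<and> k \<notin> B i. g B)"
    using sum.swap_restrict[of "{..<r} - {j}" "{B \<in> Bvecs n r p. j \<in> B i}" "\<lambda>k B. g B"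
        "\<lambda>k B. k \<notin> B i"] finite_Bvecs by (simp add: conj_assoc)
  also have "\<dots> = (\<Sum>B | B \<in> Bvecs n r p \<and> j \<in> B i. real q * g B)"
  proof (rule sum.cong[OF refl])
    fix B assume "B \<in> {B. B \<in> Bvecs n r p \<and> j \<in> B i}"
    then have "B i \<subseteq> {..<r}" "card (B i) = p" "j \<in> B i" using Bvecs_memD[of B n r p i] assms(1) by auto
    moreover from this have "{k. k \<in> {..<r} - {j} \<and> k \<notin> B i} = {..<r} - B i" by auto
    ultimately show "(\<Sum>k | k \<in> {..<r} - {j} \<and> k \<notin> B i. g B) = real q * g B"
      using assms(3) by (simp add: card_Diff_subset finite_subset)
  qed
  finally show ?thesis by (simp add: sum_distrib_left)
qed

lemma sum_treated_partners:
  fixes g :: "(nat \<Rightarrow> nat set) \<Rightarrow> real"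
  assumes "i < n" "j < r"
  shows "(\<Sum>k\<in>{..<r} - {j}. \<Sum>B | B \<in> Bvecs n r p \<and> j \<notin> B i \<and> k \<in> B i. g B)
           = real p * (\<Sum>B | B \<in> Bvecs n r p \<and> j \<notin> B i. g B)"
proof -
  have "(\<Sum>k\<in>{..<r} - {j}. \<Sum>B | B \<in> Bvecs n r p \<and> j \<notin> B i \<and> k \<in> B i. g B)
      = (\<Sum>B | B \<in> Bvecs n r p \<and> j \<notin> B i. \<Sum>k | k \<in> {..<r} - {j} \<and> k \<in> B i. g B)"
    using sum.swap_restrict[of "{..<r} - {j}" "{B \<in> Bvecs n r p. j \<notin> B i}" "\<lambda>k B. g B"
        "\<lambda>k B. k \<in> B i"] finite_Bvecs by (simp add: conj_assoc)
  also have "\<dots> = (\<Sum>B | B \<in> Bvecs n r p \<and> j \<notin> B i. real p * g B)"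
  proof (rule sum.cong[OF refl])
    fix B assume "B \<in> {B. B \<in> Bvecs n r p \<and> j \<notin> B i}"
    then have "B i \<subseteq> {..<r}" "card (B i) = p" "j \<notin> B i" using Bvecs_memD[of B n r p i] assms(1) by auto
    moreover from this have "{k. k \<in> {..<r} - {j} \<and> k \<in> B i} = B i" by auto
    ultimately show "(\<Sum>k | k \<in> {..<r} - {j} \<and> k \<in> B i. g B) = real p * g B" by simp
  qed
  finally show ?thesis by (simp add: sum_distrib_left)
qed

lemma sum_signed_eq_sum_exchange_diff:
  fixes g :: "(nat \<Rightarrow> nat set) \<Rightarrow> real"
  assumes "i < n" "j < r" "r = p + q"
  shows "(\<Sum>B\<in>Bvecs n r p. (if j \<in> B i then real q else - real p) * g B)
       = (\<Sum>k\<in>{..<r} - {j}. \<Sum>B | B \<in> Bvecs n r p \<and> j \<in> B i \<and> k \<notin> B i.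
            g B - g (exchange i j k B))"
proof -
  have "(\<Sum>B\<in>Bvecs n r p. (if j \<in> B i then real q else - real p) * g B)
      = real q * (\<Sum>B | B \<in> Bvecs n r p \<and> j \<in> B i. g B)
        - real p * (\<Sum>B | B \<in> Bvecs n r p \<and> j \<notin> B i. g B)"
    using finite_Bvecs[of n r p]
    by (simp add: if_distrib[of "\<lambda>c. c * _"] sum.If_cases Int_def sum_distrib_left sum_negf
      del: of_nat_add)
  moreover have "(\<Sum>B | B \<in> Bvecs n r p \<and> j \<in> B i \<and> k \<notin> B i. g (exchange i j k B))
      = (\<Sum>B | B \<in> Bvecs n r p \<and> j \<notin> B i \<and> k \<in> B i. g B)" if "k \<in> {..<r} - {j}" for k
    using sum.reindex_bij_betw[OF bij_betw_exchange[of i n k r j p], of g] that assms(1,2)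
    by simp
  ultimately show ?thesis
    using sum_untreated_partners[OF assms, where g = g] sum_treated_partners[OF assms(1,2), where g = g and p = p]
    by (simp add: sum_subtractf)
qed

lemma mem_Tset_iff:
  assumes "inj_on w ({..<n} \<times> {..<r})" "B \<in> Bvecs n r p" "i < n" "j < r"
  shows "w (i, j) \<in> Tset n B w \<longleftrightarrow> j \<in> B i"
proof
  assume "w (i, j) \<in> Tset n B w"
  then obtain i' j' where "w (i, j) = w (i', j')" "i' < n" "j' \<in> B i'"
    unfolding Tset_def by blast
  moreover from this have "j' < r" using Bvecs_memD[OF assms(2)] by blast
  ultimately show "j \<in> B i" using inj_onD[OF assms(1)] assms(3,4) by fastforce
qed (use assms in \<open>auto simp: Tset_def\<close>)

lemma Tset_exchange:
  assumes w: "inj_on w ({..<n} \<times> {..<r})" and B: "B \<in> Bvecs n r p"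
    and "i < n" "j \<in> B i" "k < r" "k \<notin> B i"
  shows "Tset n (exchange i j k B) w = insert (w (i, k)) (Tset n B w - {w (i, j)})"
proof (intro set_eqI iffI)
  have mem: "(i', j') \<in> {..<n} \<times> {..<r}" if "i' < n" "j' \<in> B i'" for i' j'
    using Bvecs_memD[OF B] that by auto
  fix x
  assume "x \<in> Tset n (exchange i j k B) w"
  then obtain i' j' where x: "x = w (i', j')" "i' < n" "j' \<in> (exchange i j k B) i'"
    unfolding Tset_def by blast
  show "x \<in> insert (w (i, k)) (Tset n B w - {w (i, j)})"
  proof (cases "(i', j') = (i, k)")
    case False
    then have "j' \<in> B i'" "(i', j') \<noteq> (i, j)"
      using x(3) by (auto simp: exchange_def split: if_splits)
    then show ?thesis
      using x mem assms(3,4) inj_onD[OF w] unfolding Tset_def by blast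
  qed (use x in simp)
next
  fix x
  assume "x \<in> insert (w (i, k)) (Tset n B w - {w (i, j)})"
  then consider "x = w (i, k)" | i' j' where "x = w (i', j')" "i' < n" "j' \<in> B i'" "(i', j') \<noteq> (i, j)"
    unfolding Tset_def by blast
  then show "x \<in> Tset n (exchange i j k B) w"
    by cases (use assms(3) in \<open>auto simp: Tset_def exchange_def\<close>)
qed

section \<open>The bound for a fixed partition\<close>

definition lip_weight :: "'a set \<Rightarrow> ('a \<Rightarrow> 'a \<Rightarrow> bool) \<Rightarrow> ('a \<Rightarrow> real) \<Rightarrow> 'a \<Rightarrow> 'a \<Rightarrow> real" where
  "lip_weight V E K v u = (if E v u then K v / real (deg V E v) else 0)"

lemma lipschitz_vertex_change_one:
  assumes "lipschitz_vertex V E f v (K v)" "K v \<ge> 0"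
    and "A \<subseteq> nbhd V E v" "A' \<subseteq> nbhd V E v" "(A - A') \<union> (A' - A) \<subseteq> {u}"
  shows "\<bar>f v A - f v A'\<bar> \<le> lip_weight V E K v u"
proof -
  have "(A - A') \<union> (A' - A) \<subseteq> {u} \<inter> nbhd V E v" using assms(3-5) by blast
  then have "card ((A - A') \<union> (A' - A)) \<le> card ({u} \<inter> nbhd V E v)"
    by (intro card_mono) auto
  also have "\<dots> \<le> (if E v u then 1 else 0)" by (auto simp: nbhd_def card_le_Suc0_iff_eq)
  finally have "K v * real (card ((A - A') \<union> (A' - A))) / real (deg V E v)
      \<le> K v * (if E v u then 1 else 0) / real (deg V E v)"
    using assms(2) by (intro divide_right_mono mult_left_mono) auto
  moreover have "\<bar>f v A - f v A'\<bar> \<le> K v * real (card ((A - A') \<union> (A' - A))) / real (deg V E v)"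
    using assms(1,3,4) unfolding lipschitz_vertex_def by blast
  ultimately show ?thesis unfolding lip_weight_def by (simp split: if_splits)
qed

lemma real_card_Bvecs_mem_notin:
  assumes "i < n" "j < r" "k < r" "j \<noteq> k" "p > 0" "r = p + q"
  shows "real (card {B \<in> Bvecs n r p. j \<in> B i \<and> k \<notin> B i})
           = real p * real q * real (card (Bvecs n r p)) / (real r * (real r - 1))"
proof -
  have "real r - 1 = real (r - 1)" "r - p = q" using assms(2,6) by auto
  then have "real (card {B \<in> Bvecs n r p. j \<in> B i \<and> k \<notin> B i}) * (real r * (real r - 1))
      = real p * real q * real (card (Bvecs n r p))"
    using arg_cong[OF card_Bvecs_mem_notin[OF assms(1-5)], of real] by (simp only: of_nat_mult)
  moreover have "real r * (real r - 1) \<noteq> 0" using assms(2-4) by simp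
  ultimately show ?thesis by (simp add: field_simps)
qed

lemma abs_sum_sigmaT_le:
  assumes w: "inj_on w ({..<n} \<times> {..<r})"
    and "r = p + q" "p > 0" "i < n" "j < r"
    and lip: "lipschitz_vertex V E f (w (i, j)) (K (w (i, j)))" "K (w (i, j)) \<ge> 0"
    and irrefl: "\<not> E (w (i, j)) (w (i, j))"
  shows "\<bar>\<Sum>B\<in>Bvecs n r p. sigmaT p q (Tset n B w) (w (i, j))
              * f (w (i, j)) (Tset n B w \<inter> nbhd V E (w (i, j)))\<bar>
         \<le> real p * real q * real (card (Bvecs n r p)) / (real r * (real r - 1))
              * (\<Sum>k\<in>{..<r} - {j}. lip_weight V E K (w (i, j)) (w (i, k)))"
proof -
  define v where "v = w (i, j)"
  define g where "g B = f v (Tset n B w \<inter> nbhd V E v)" for B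
  define c where "c = real p * real q * real (card (Bvecs n r p)) / (real r * (real r - 1))"
  have "(\<Sum>B\<in>Bvecs n r p. sigmaT p q (Tset n B w) v * g B)
      = (\<Sum>B\<in>Bvecs n r p. (if j \<in> B i then real q else - real p) * g B)"
    using mem_Tset_iff[OF w _ assms(4,5)] by (intro sum.cong) (auto simp: sigmaT_def v_def)
  also have "\<dots> = (\<Sum>k\<in>{..<r} - {j}. \<Sum>B | B \<in> Bvecs n r p \<and> j \<in> B i \<and> k \<notin> B i.
                   g B - g (exchange i j k B))"
    using sum_signed_eq_sum_exchange_diff[OF assms(4,5,2)] .
  finally have sum_eq: "(\<Sum>B\<in>Bvecs n r p. sigmaT p q (Tset n B w) v * g B) = \<dots>" .
  have diff_le: "\<bar>g B - g (exchange i j k B)\<bar> \<le> lip_weight V E K v (w (i, k))"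
    if "k \<in> {..<r} - {j}" "B \<in> Bvecs n r p" "j \<in> B i" "k \<notin> B i" for k B
  proof -
    have "Tset n (exchange i j k B) w = insert (w (i, k)) (Tset n B w - {v})"
      using Tset_exchange[OF w that(2) assms(4) that(3) _ that(4)] that(1) by (simp add: v_def)
    moreover have "v \<notin> nbhd V E v" using irrefl by (simp add: nbhd_def v_def)
    ultimately show ?thesis
      unfolding g_def by (intro lipschitz_vertex_change_one) (use lip in \<open>auto simp: v_def\<close>)
  qed
  have "\<bar>\<Sum>k\<in>{..<r} - {j}. \<Sum>B | B \<in> Bvecs n r p \<and> j \<in> B i \<and> k \<notin> B i.
            g B - g (exchange i j k B)\<bar>
      \<le> (\<Sum>k\<in>{..<r} - {j}. real (card {B \<in> Bvecs n r p. j \<in> B i \<and> k \<notin> B i})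
            * lip_weight V E K v (w (i, k)))"
    by (rule order_trans[OF sum_abs sum_mono], rule order_trans[OF sum_abs sum_bounded_above])
       (use diff_le in auto)
  also have "\<dots> = c * (\<Sum>k\<in>{..<r} - {j}. lip_weight V E K v (w (i, k)))"
    unfolding sum_distrib_left c_def using real_card_Bvecs_mem_notin[OF assms(4,5) _ _ assms(3,2)]
    by (intro sum.cong) auto
  finally show ?thesis using sum_eq unfolding g_def v_def c_def by simp
qed

lemma abs_cond_exp_xi_le:
  assumes "r = p + q" "p > 0" "q > 0" "n > 0"
    and w: "bij_betw w ({..<n} \<times> {..<r}) V"
    and irrefl: "\<And>v. \<not> E v v"
    and K: "\<And>v. v \<in> V \<Longrightarrow> K v \<ge> 0"
    and lip: "\<And>v. v \<in> V \<Longrightarrow> lipschitz_vertex V E f v (K v)"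
  shows "\<bar>cond_exp_xi V E f n p q w\<bar>
         \<le> (\<Sum>(i, j)\<in>{..<n} \<times> {..<r}. \<Sum>k\<in>{..<r} - {j}. lip_weight V E K (w (i, j)) (w (i, k)))
             / (real n * real r * (real r - 1))"
proof -
  define h where "h v B = sigmaT p q (Tset n B w) v * f v (Tset n B w \<inter> nbhd V E v)" for v B
  define a where "a = real p * real q * real (card (Bvecs n r p))"
  define L where "L i j = (\<Sum>k\<in>{..<r} - {j}. lip_weight V E K (w (i, j)) (w (i, k)))" for i j
  have "a > 0" using assms(1-3) by (simp add: a_def card_Bvecs)
  have "cond_exp_xi V E f n p q w = (\<Sum>B\<in>Bvecs n r p. \<Sum>v\<in>V. h v B) / (a * real n)"
    by (simp add: cond_exp_xi_def xi_def h_def a_def assms(1) sum_divide_distrib[symmetric] ac_simps)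
  also have "(\<Sum>B\<in>Bvecs n r p. \<Sum>v\<in>V. h v B) = (\<Sum>(i, j)\<in>{..<n} \<times> {..<r}. \<Sum>B\<in>Bvecs n r p. h (w (i, j)) B)"
    using sum.reindex_bij_betw[OF w, of "\<lambda>v. \<Sum>B\<in>Bvecs n r p. h v B"]
    by (simp add: sum.swap[of _ "Bvecs n r p"] case_prod_unfold)
  finally have ce: "cond_exp_xi V E f n p q w = \<dots> / (a * real n)" .
  have "\<bar>\<Sum>B\<in>Bvecs n r p. h (w (i, j)) B\<bar> \<le> a / (real r * (real r - 1)) * L i j"
    if "(i, j) \<in> {..<n} \<times> {..<r}" for i j
  proof -
    have "w (i, j) \<in> V" using w that by (auto dest: bij_betw_apply)
    then show ?thesis
      unfolding h_def a_def L_def using that K lip irrefl bij_betw_imp_inj_on[OF w]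
      by (intro abs_sum_sigmaT_le[OF _ assms(1,2)]) auto
  qed
  then have sum_le: "\<bar>\<Sum>(i, j)\<in>{..<n} \<times> {..<r}. \<Sum>B\<in>Bvecs n r p. h (w (i, j)) B\<bar>
      \<le> a / (real r * (real r - 1)) * (\<Sum>(i, j)\<in>{..<n} \<times> {..<r}. L i j)"
    unfolding sum_distrib_left
    by (intro order_trans[OF sum_abs sum_mono]) (auto simp: case_prod_unfold)
  have "\<bar>cond_exp_xi V E f n p q w\<bar>
      \<le> a / (real r * (real r - 1)) * (\<Sum>(i, j)\<in>{..<n} \<times> {..<r}. L i j) / (a * real n)"
  proof -
    have "a * real n > 0" using \<open>a > 0\<close> assms(4) by simp
    then show ?thesis
      unfolding ce abs_divide abs_of_pos[OF \<open>a * real n > 0\<close>]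
      by (intro divide_right_mono[OF sum_le]) simp
  qed
  also have "\<dots> = (\<Sum>(i, j)\<in>{..<n} \<times> {..<r}. L i j) / (real n * real r * (real r - 1))"
    using \<open>a > 0\<close> by (simp add: mult.assoc)
  finally show ?thesis unfolding L_def .
qed

section \<open>Uniformly random bijections\<close>

lemma sum_comp_uniform_fibers:
  fixes h :: "'b \<Rightarrow> real"
  assumes "finite S" "finite T" "g ` S \<subseteq> T"
    and fibers: "\<And>y y'. y \<in> T \<Longrightarrow> y' \<in> T \<Longrightarrow> card {x \<in> S. g x = y} = card {x \<in> S. g x = y'}"
  shows "(\<Sum>x\<in>S. h (g x)) * real (card T) = real (card S) * (\<Sum>y\<in>T. h y)"
proof (cases "T = {}")
  case True
  then show ?thesis using assms(3) by simp
next
  case False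
  then obtain y0 where "y0 \<in> T" by blast
  define m where "m = card {x \<in> S. g x = y0}"
  have "(\<Sum>x\<in>S. h (g x)) = (\<Sum>y\<in>T. \<Sum>x | x \<in> S \<and> g x = y. h (g x))"
    using sum.group[OF assms(1-3), of "\<lambda>x. h (g x)"] by simp
  also have "\<dots> = (\<Sum>y\<in>T. real m * h y)"
    using fibers[OF _ \<open>y0 \<in> T\<close>] unfolding m_def by (intro sum.cong) auto
  finally have "(\<Sum>x\<in>S. h (g x)) = real m * (\<Sum>y\<in>T. h y)" by (simp add: sum_distrib_left)
  moreover have "card S = (\<Sum>y\<in>T. card {x \<in> S. g x = y})"
    using sum.group[OF assms(1-3), of "\<lambda>_. 1::nat"] by simp
  then have "card S = m * card T"
    using fibers[OF _ \<open>y0 \<in> T\<close>] unfolding m_def by simp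
  ultimately show ?thesis by simp
qed

definition bijections :: "'i set \<Rightarrow> 'a set \<Rightarrow> ('i \<Rightarrow> 'a) set" where
  "bijections I V = {w \<in> I \<rightarrow>\<^sub>E V. bij_betw w I V}"

lemma finite_bijections: "finite I \<Longrightarrow> finite V \<Longrightarrow> finite (bijections I V)"
  unfolding bijections_def by (rule finite_subset[OF _ finite_PiE]) auto

lemma bijections_nonempty:
  assumes "finite I" "finite V" "card I = card V"
  shows "bijections I V \<noteq> {}"
proof -
  obtain h where "bij_betw h I V" using finite_same_card_bij[OF assms] by blast
  then have "restrict h I \<in> bijections I V"
    unfolding bijections_def by (auto simp: bij_betw_def inj_on_def)
  then show ?thesis by blast
qed

lemma exists_bij_betw_map_pair:
  assumes "x \<in> V" "y \<in> V" "x \<noteq> y" "x' \<in> V" "y' \<in> V" "x' \<noteq> y'"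
  shows "\<exists>\<sigma>. bij_betw \<sigma> V V \<and> \<sigma> x = x' \<and> \<sigma> y = y'"
proof -
  define y1 where "y1 = transpose x x' y"
  have "y1 \<in> V" "y1 \<noteq> x'" using assms by (auto simp: y1_def transpose_def)
  then have "bij_betw (transpose y1 y' \<circ> transpose x x') V V"
    using assms by (intro bij_betw_trans[of _ V V _ V]) simp_all
  moreover have "(transpose y1 y' \<circ> transpose x x') x = x'"
    using \<open>y1 \<noteq> x'\<close> assms(6) by simp
  ultimately show ?thesis by (intro exI[of _ "transpose y1 y' \<circ> transpose x x'"]) (simp add: y1_def)
qed

lemma card_bijections_fiber_mono:
  assumes \<sigma>: "bij_betw \<sigma> V V" "\<sigma> x = x'" "\<sigma> y = y'" and "finite I" "finite V" "a \<in> I" "b \<in> I"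
  shows "card {w \<in> bijections I V. (w a, w b) = (x, y)} \<le> card {w \<in> bijections I V. (w a, w b) = (x', y')}"
proof (rule card_inj_on_le[where f = "\<lambda>w. restrict (\<sigma> \<circ> w) I"])
  show "finite {w \<in> bijections I V. (w a, w b) = (x', y')}"
    using finite_bijections[OF assms(4,5)] by simp
  show "inj_on (\<lambda>w. restrict (\<sigma> \<circ> w) I) {w \<in> bijections I V. (w a, w b) = (x, y)}"
  proof (rule inj_onI)
    fix w1 w2 assume w: "w1 \<in> {w \<in> bijections I V. (w a, w b) = (x, y)}"
      "w2 \<in> {w \<in> bijections I V. (w a, w b) = (x, y)}"
      and eq: "restrict (\<sigma> \<circ> w1) I = restrict (\<sigma> \<circ> w2) I"
    show "w1 = w2"
    proof (rule extensionalityI[of _ I])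
      fix z assume "z \<in> I"
      then have "\<sigma> (w1 z) = \<sigma> (w2 z)" "w1 z \<in> V" "w2 z \<in> V"
        using fun_cong[OF eq, of z] w by (auto simp: bijections_def)
      then show "w1 z = w2 z" using bij_betw_imp_inj_on[OF \<sigma>(1)] by (auto dest: inj_onD)
    qed (use w in \<open>auto simp: bijections_def PiE_def\<close>)
  qed
  show "(\<lambda>w. restrict (\<sigma> \<circ> w) I) ` {w \<in> bijections I V. (w a, w b) = (x, y)}
        \<subseteq> {w \<in> bijections I V. (w a, w b) = (x', y')}"
  proof (rule image_subsetI)
    fix w assume "w \<in> {w \<in> bijections I V. (w a, w b) = (x, y)}"
    then have w: "bij_betw w I V" "w a = x" "w b = y" by (auto simp: bijections_def)
    have "bij_betw (\<sigma> \<circ> w) I V" using bij_betw_trans[OF w(1) \<sigma>(1)] .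
    then have "bij_betw (restrict (\<sigma> \<circ> w) I) I V" by (rule bij_betw_cong[THEN iffD1, rotated]) simp
    moreover have "restrict (\<sigma> \<circ> w) I \<in> I \<rightarrow>\<^sub>E V"
      using bij_betwE[OF \<open>bij_betw (\<sigma> \<circ> w) I V\<close>] by simp
    ultimately show "restrict (\<sigma> \<circ> w) I \<in> {w \<in> bijections I V. (w a, w b) = (x', y')}"
      using w \<sigma> assms(6,7) by (simp add: bijections_def)
  qed
qed

lemma sum_bijections_pair:
  fixes \<phi> :: "'a \<Rightarrow> 'a \<Rightarrow> real"
  assumes "finite I" "finite V" "a \<in> I" "b \<in> I" "a \<noteq> b"
  shows "(\<Sum>w\<in>bijections I V. \<phi> (w a) (w b)) * (real (card V) * (real (card V) - 1))
         = real (card (bijections I V)) * (\<Sum>x\<in>V. \<Sum>y\<in>V - {x}. \<phi> x y)"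
proof -
  let ?T = "SIGMA x:V. V - {x}"
  have img: "(\<lambda>w. (w a, w b)) ` bijections I V \<subseteq> ?T"
    using assms(3-5) by (auto simp: bijections_def bij_betw_def inj_on_def)
  have fiber_le: "card {w \<in> bijections I V. (w a, w b) = d} \<le> card {w \<in> bijections I V. (w a, w b) = d'}"
    if "d \<in> ?T" "d' \<in> ?T" for d d'
  proof -
    obtain x y x' y' where d: "d = (x, y)" "d' = (x', y')" by fastforce
    with that obtain \<sigma> where "bij_betw \<sigma> V V" "\<sigma> x = x'" "\<sigma> y = y'"
      using exists_bij_betw_map_pair[of x V y x' y'] by auto
    then show ?thesis unfolding d by (rule card_bijections_fiber_mono[OF _ _ _ assms(1-4)])
  qed
  have "(\<Sum>w\<in>bijections I V. case_prod \<phi> (w a, w b)) * real (card ?T)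
      = real (card (bijections I V)) * (\<Sum>d\<in>?T. case_prod \<phi> d)"
    using finite_bijections[OF assms(1,2)] _ img
  proof (rule sum_comp_uniform_fibers)
    show "finite ?T" using assms(2) by simp
  qed (use fiber_le in \<open>blast intro: le_antisym\<close>)
  moreover have "card ?T = card V * (card V - 1)"
    using assms(2) by (simp add: card_SigmaI)
  then have "real (card ?T) = real (card V) * (real (card V) - 1)"
    by (cases "card V") (simp_all add: algebra_simps)
  moreover have "(\<Sum>d\<in>?T. case_prod \<phi> d) = (\<Sum>x\<in>V. \<Sum>y\<in>V - {x}. \<phi> x y)"
    using assms(2) by (simp add: sum.Sigma)
  ultimately show ?thesis by simp
qed

section \<open>Averaging over partitions\<close>

lemma partitions_eq_bijections: "partitions V n r = bijections ({..<n} \<times> {..<r}) V"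
  unfolding partitions_def bijections_def ..

lemma sum_lip_weight_eq:
  assumes "finite V" "\<And>v. \<not> E v v" "\<And>v. v \<in> V \<Longrightarrow> \<exists>u. E v u"
    and "\<And>u v. E u v \<Longrightarrow> u \<in> V \<and> v \<in> V"
  shows "(\<Sum>x\<in>V. \<Sum>y\<in>V - {x}. lip_weight V E K x y) = (\<Sum>v\<in>V. K v)"
proof (rule sum.cong[OF refl])
  fix x assume "x \<in> V"
  have "{y \<in> V - {x}. E x y} = nbhd V E x" using assms(2) by (auto simp: nbhd_def)
  moreover have "deg V E x > 0"
    using assms(1,3,4) \<open>x \<in> V\<close> by (force simp: deg_def nbhd_def card_gt_0_iff)
  ultimately show "(\<Sum>y\<in>V - {x}. lip_weight V E K x y) = K x"
    using assms(1) by (simp add: lip_weight_def sum.If_cases Int_def deg_def)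
qed

lemma sum_partitions_lip_weight:
  assumes "finite V" "card V \<ge> 2" "\<And>v. \<not> E v v" "\<And>v. v \<in> V \<Longrightarrow> \<exists>u. E v u"
    and "\<And>u v. E u v \<Longrightarrow> u \<in> V \<and> v \<in> V"
    and "a \<in> {..<n} \<times> {..<r}" "b \<in> {..<n} \<times> {..<r}" "a \<noteq> b"
  shows "(\<Sum>w\<in>partitions V n r. lip_weight V E K (w a) (w b))
         = real (card (partitions V n r)) * (\<Sum>v\<in>V. K v) / (real (card V) * (real (card V) - 1))"
proof -
  have "real (card V) * (real (card V) - 1) \<noteq> 0" using assms(2) by simp
  then show ?thesis
    using sum_bijections_pair[OF _ assms(1,6-8), of "lip_weight V E K"] sum_lip_weight_eq[OF assms(1,3-5)]
    by (simp add: partitions_eq_bijections field_simps)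
qed

lemma sum_abs_cond_exp_xi_le:
  assumes "r = p + q" "p > 0" "q > 0" "n > 0" "finite V" "card V = r * n"
    and "\<And>u v. E u v \<Longrightarrow> u \<in> V \<and> v \<in> V" "\<And>v. \<not> E v v" "\<And>v. v \<in> V \<Longrightarrow> \<exists>u. E v u"
    and "\<And>v. v \<in> V \<Longrightarrow> K v \<ge> 0" "\<And>v. v \<in> V \<Longrightarrow> lipschitz_vertex V E f v (K v)"
  shows "(\<Sum>w\<in>partitions V n r. \<bar>cond_exp_xi V E f n p q w\<bar>)
         \<le> real (card (partitions V n r)) * (\<Sum>v\<in>V. K v) / (real (card V) * (real (card V) - 1))"
    (is "_ \<le> ?c")
proof -
  define I where "I = {..<n} \<times> {..<r}"
  have "2 \<le> r" "r \<le> r * n" using assms(1-4) by simp_all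
  then have "card V \<ge> 2" using assms(6) by linarith
  then have pair: "(\<Sum>w\<in>partitions V n r. lip_weight V E K (w (i, j)) (w (i, k))) = ?c"
    if "(i, j) \<in> I" "k \<in> {..<r} - {j}" for i j k
    using that assms(5,7-9) by (intro sum_partitions_lip_weight) (auto simp: I_def)
  have "(\<Sum>w\<in>partitions V n r. \<bar>cond_exp_xi V E f n p q w\<bar>)
      \<le> (\<Sum>w\<in>partitions V n r. (\<Sum>(i, j)\<in>I. \<Sum>k\<in>{..<r} - {j}. lip_weight V E K (w (i, j)) (w (i, k)))
            / (real n * real r * (real r - 1)))"
    unfolding I_def using assms(1-4,8,10,11)
    by (intro sum_mono abs_cond_exp_xi_le) (auto simp: partitions_def)
  also have "\<dots> = (\<Sum>(i, j)\<in>I. \<Sum>k\<in>{..<r} - {j}.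
                    \<Sum>w\<in>partitions V n r. lip_weight V E K (w (i, j)) (w (i, k)))
                  / (real n * real r * (real r - 1))"
    by (simp add: sum_divide_distrib[symmetric] case_prod_unfold sum.swap[of _ "partitions V n r"])
  also have "\<dots> = (\<Sum>(i, j)\<in>I. \<Sum>k\<in>{..<r} - {j}. ?c) / (real n * real r * (real r - 1))"
    using pair by (auto intro!: sum.cong arg_cong2[where f = "(/)"])
  also have "(\<Sum>(i, j)\<in>I. \<Sum>k\<in>{..<r} - {j}. ?c) = (\<Sum>(i, j)\<in>I. (real r - 1) * ?c)"
    by (intro sum.cong) (auto simp: I_def of_nat_diff)
  also have "\<dots> = real (card I) * (real r - 1) * ?c" by (simp add: case_prod_unfold)
  also have "real (card I) * (real r - 1) = real n * real r * (real r - 1)" by (simp add: I_def)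
  also have "\<dots> * ?c / (real n * real r * (real r - 1)) = ?c"
    using \<open>2 \<le> r\<close> assms(4) by (intro nonzero_mult_div_cancel_left) simp
  finally show ?thesis .
qed

theorem mainTheorem12:
  fixes V :: "'a set" and E :: "'a \<Rightarrow> 'a \<Rightarrow> bool"
    and f :: "'a \<Rightarrow> 'a set \<Rightarrow> real" and K :: "'a \<Rightarrow> real"
    and n p q :: nat
  assumes "n > 0" "p > 0" "q > 0"
    and "finite V" "card V = (p + q) * n"
    and "\<And>u v. E u v \<Longrightarrow> u \<in> V \<and> v \<in> V"
    and "\<And>u v. E u v \<Longrightarrow> E v u"
    and "\<And>v. \<not> E v v"
    and "\<And>v. v \<in> V \<Longrightarrow> \<exists>u. E v u"
    and "\<And>v. v \<in> V \<Longrightarrow> f v {} = 0"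
    and "\<And>v. v \<in> V \<Longrightarrow> K v > 0"
    and "\<And>v. v \<in> V \<Longrightarrow> lipschitz_vertex V E f v (K v)"
  shows "(\<Sum>w\<in>partitions V n (p + q). \<bar>cond_exp_xi V E f n p q w\<bar>)
            / real (card (partitions V n (p + q)))
         \<le> ((\<Sum>v\<in>V. K v) / real ((p + q) * n)) / (real ((p + q) * n) - 1)"
proof -
  let ?P = "partitions V n (p + q)"
  have "finite ({..<n} \<times> {..<p + q})" "card ({..<n} \<times> {..<p + q}) = card V"
    using assms(5) by (simp_all add: mult.commute)
  then have "card ?P > 0"
    using finite_bijections bijections_nonempty assms(4)
    by (metis partitions_eq_bijections card_gt_0_iff)
  moreover have "(\<Sum>w\<in>?P. \<bar>cond_exp_xi V E f n p q w\<bar>)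
      \<le> real (card ?P) * (\<Sum>v\<in>V. K v) / (real (card V) * (real (card V) - 1))"
    using assms(1-6,8,9,12) less_imp_le[OF assms(11)] by (intro sum_abs_cond_exp_xi_le) auto
  ultimately show ?thesis
    using assms(5) by (simp add: pos_divide_le_eq mult.commute)
qed

end
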